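(* Let $n\geqslant2$, $m\geqslant1$, let $\tau$ be a cuspidal $\mathrm{R}$-representation of $\mathrm{GL}_n(k_\mathrm{F})$, and let $g=\mathrm{diag}(\varpi_\mathrm{F}^{\alpha_{n-1}},\dots,\varpi_\mathrm{F}^{\alpha_1},1)$ with integers $0\leqslant\alpha_1\leqslant\dots\leqslant\alpha_{n-1}$ and $\alpha_{n-1}\geqslant m$. Then $$\mathrm{Hom}_{\mathrm{R}[\overline{\mathrm{K}_n\cap g\mathrm{K}_n(m)g^{-1}}]}(1,\tau)=0.$$
   Context: $\mathrm{F}$ non-archimedean local field, ring of integers $\mathfrak{o}_\mathrm{F}$, maximal ideal $\mathfrak{p}_\mathrm{F}=\varpi_\mathrm{F}\mathfrak{o}_\mathrm{F}$, residue field $k_\mathrm{F}$ of characteristic $p$. $\mathrm{R}$ algebraically closed of characteristic $\ell\neq p$. $\mathrm{K}_n=\mathrm{GL}_n(\mathfrak{o}_\mathrm{F})$, $\mathrm{K}_n^1=1+\mathrm{M}_n(\mathfrak{p}_\mathrm{F})$; for a subgroup $H\subseteq\mathrm{K}_n$, $\overline H$ is its image in $\mathrm{K}_n/\mathrm{K}_n^1=\mathrm{GL}_n(k_\mathrm{F})$. For $m\geqslant1$, $\mathrm{K}_n(m)=\{\left(\begin{smallmatrix}a&b\\c&d\end{smallmatrix}\right)\in\mathrm{K}_n: c\in\mathrm{M}_{1\times(n-1)}(\mathfrak{p}_\mathrm{F}^m),\ d\in1+\mathfrak{p}_\mathrm{F}^m\}$ (blocks $(n-1)+1$). Cuspidal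 representation of $\mathrm{GL}_n(k_\mathrm{F})$: irreducible with no nonzero vectors fixed by the unipotent radical of any proper parabolic subgroup. *)

theory Defs
  imports "Jordan_Normal_Form.Determinant" "HOL-Computational_Algebra.Polynomial"
begin

text \<open>A normalised discrete valuation on a field; v is only meaningful on nonzero
  elements (v 0 = infinity by convention, encoded by the explicit x = 0 cases below).\<close>
definition discrete_valuation :: "('f::field \<Rightarrow> int) \<Rightarrow> bool" where
  "discrete_valuation v \<longleftrightarrow>
     (\<forall>x y. x \<noteq> 0 \<longrightarrow> y \<noteq> 0 \<longrightarrow> v (x * y) = v x + v y) \<and>
     (\<forall>x y. x \<noteq> 0 \<longrightarrow> y \<noteq> 0 \<longrightarrow> x + y \<noteq> 0 \<longrightarrow> v (x + y) \<ge> min (v x) (v y)) \<and>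
     (\<exists>x. x \<noteq> 0 \<and> v x = 1)"

text \<open>x lies in p_F^k (with k an integer; 0 lies in every p_F^k).\<close>
definition in_pow_ideal :: "('f::field \<Rightarrow> int) \<Rightarrow> int \<Rightarrow> 'f \<Rightarrow> bool" where
  "in_pow_ideal v k x \<longleftrightarrow> x = 0 \<or> v x \<ge> k"

definition val_ring :: "('f::field \<Rightarrow> int) \<Rightarrow> 'f set" where
  "val_ring v = {x. in_pow_ideal v 0 x}"

definition max_ideal :: "('f::field \<Rightarrow> int) \<Rightarrow> 'f set" where
  "max_ideal v = {x. in_pow_ideal v 1 x}"

definition val_complete :: "('f::field \<Rightarrow> int) \<Rightarrow> bool" where
  "val_complete v \<longleftrightarrow>
     (\<forall>a :: nat \<Rightarrow> 'f.
        (\<forall>N. \<exists>M. \<forall>i\<ge>M. \<forall>j\<ge>M. in_pow_ideal v N (a i - a j)) \<longrightarrow>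
        (\<exists>L. \<forall>N. \<exists>M. \<forall>i\<ge>M. in_pow_ideal v N (a i - L)))"

text \<open>red : o_F \<rightarrow> k is a residue map: a surjective unital ring homomorphism from
  the valuation ring onto k with kernel p_F; so k is (a copy of) the residue field k_F.\<close>
definition residue_map :: "('f::field \<Rightarrow> int) \<Rightarrow> ('f \<Rightarrow> 'k::field) \<Rightarrow> bool" where
  "residue_map v red \<longleftrightarrow>
     (\<forall>x\<in>val_ring v. \<forall>y\<in>val_ring v. red (x + y) = red x + red y \<and> red (x * y) = red x * red y) \<and>
     red 1 = 1 \<and>
     red ` val_ring v = UNIV \<and>
     (\<forall>x\<in>val_ring v. red x = 0 \<longleftrightarrow> x \<in> max_ideal v)"

text \<open>F (with valuation v) is a non-archimedean local field with residue field k
  (via red) and uniformiser \<pi>: complete for a normalised discrete valuation with finite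
  residue field (finiteness comes from the sort of k).\<close>
definition nonarch_local_field ::
  "('f::field \<Rightarrow> int) \<Rightarrow> ('f \<Rightarrow> 'k::{field,finite}) \<Rightarrow> 'f \<Rightarrow> bool" where
  "nonarch_local_field v red \<pi> \<longleftrightarrow>
     discrete_valuation v \<and> val_complete v \<and> residue_map v red \<and> \<pi> \<noteq> 0 \<and> v \<pi> = 1"

definition GLmat :: "nat \<Rightarrow> 'a::field mat set" where
  "GLmat n = {A \<in> carrier_mat n n. det A \<noteq> 0}"

definition Kn :: "('f::field \<Rightarrow> int) \<Rightarrow> nat \<Rightarrow> 'f mat set" where
  "Kn v n = {A \<in> carrier_mat n n. (\<forall>i<n. \<forall>j<n. A $$ (i,j) \<in> val_ring v) \<and>
                det A \<noteq> 0 \<and> v (det A) = 0}"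

definition Knm :: "('f::field \<Rightarrow> int) \<Rightarrow> nat \<Rightarrow> nat \<Rightarrow> 'f mat set" where
  "Knm v n m = {A \<in> Kn v n. (\<forall>j<n-1. in_pow_ideal v (int m) (A $$ (n-1, j))) \<and>
                 in_pow_ideal v (int m) (A $$ (n-1, n-1) - 1)}"

text \<open>g = diag(\<pi>^\<alpha>_{n-1}, ..., \<pi>^\<alpha>_1, 1): the i-th diagonal entry (0-based, i < n-1)
  is \<pi>^\<alpha>_{n-1-i}, the last one is 1.\<close>
definition gdiag :: "'f::field \<Rightarrow> nat \<Rightarrow> (nat \<Rightarrow> nat) \<Rightarrow> 'f mat" where
  "gdiag \<pi> n \<alpha> = mat n n (\<lambda>(i,j). if i = j then (if i < n - 1 then \<pi> ^ \<alpha> (n - 1 - i) else 1) else 0)"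

text \<open>K_n \<inter> g K_n(m) g^{-1}\<close>
definition Kn_cap_conj :: "('f::field \<Rightarrow> int) \<Rightarrow> nat \<Rightarrow> nat \<Rightarrow> 'f mat \<Rightarrow> 'f mat set" where
  "Kn_cap_conj v n m g = {k \<in> Kn v n. \<exists>h\<in>Knm v n m. k * g = g * h}"

text \<open>Image in GL_n(k_F) = K_n/K_n^1 (reduction of entries).\<close>
definition reduce_mat :: "('f \<Rightarrow> 'k) \<Rightarrow> 'f mat \<Rightarrow> 'k mat" where
  "reduce_mat red A = map_mat red A"

definition is_rep ::
  "('r::field \<Rightarrow> 'v::ab_group_add \<Rightarrow> 'v) \<Rightarrow> nat \<Rightarrow> ('k::field mat \<Rightarrow> 'v \<Rightarrow> 'v) \<Rightarrow> bool" where
  "is_rep scale n \<rho> \<longleftrightarrow> vector_space scale \<and>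
     (\<forall>A\<in>GLmat n. Vector_Spaces.linear scale scale (\<rho> A)) \<and>
     (\<forall>A\<in>GLmat n. \<forall>B\<in>GLmat n. \<rho> (A * B) = \<rho> A \<circ> \<rho> B) \<and>
     \<rho> (1\<^sub>m n) = id"

definition irreducible_rep ::
  "('r::field \<Rightarrow> 'v::ab_group_add \<Rightarrow> 'v) \<Rightarrow> nat \<Rightarrow> ('k::field mat \<Rightarrow> 'v \<Rightarrow> 'v) \<Rightarrow> bool" where
  "irreducible_rep scale n \<rho> \<longleftrightarrow> is_rep scale n \<rho> \<and> (\<exists>w::'v. w \<noteq> 0) \<and>
     (\<forall>W. module.subspace scale W \<longrightarrow> (\<forall>A\<in>GLmat n. \<forall>w\<in>W. \<rho> A w \<in> W) \<longrightarrow>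
          W = {0} \<or> W = UNIV)"

text \<open>Block index of row i for the standard parabolic with cut points S \<subseteq> {1..<n}.\<close>
definition blk :: "nat set \<Rightarrow> nat \<Rightarrow> nat" where
  "blk S i = card {s\<in>S. s \<le> i}"

definition std_unip_radical :: "nat \<Rightarrow> nat set \<Rightarrow> 'k::field mat set" where
  "std_unip_radical n S = {A \<in> carrier_mat n n. \<forall>i<n. \<forall>j<n.
      (blk S i = blk S j \<longrightarrow> A $$ (i,j) = (if i = j then 1 else 0)) \<and>
      (blk S i > blk S j \<longrightarrow> A $$ (i,j) = 0)}"

text \<open>Unipotent radical of the parabolic x P_S x^{-1}: the conjugate x U_S x^{-1}.\<close>
definition unip_radical :: "nat \<Rightarrow> nat set \<Rightarrow> 'k::field mat \<Rightarrow> 'k mat set" where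
  "unip_radical n S x = {y \<in> carrier_mat n n. \<exists>u\<in>std_unip_radical n S. y * x = x * u}"

text \<open>Cuspidal: irreducible, and no nonzero vector fixed by the unipotent radical of any
  proper parabolic subgroup (all conjugates of proper standard parabolics, S \<noteq> {}).\<close>
definition cuspidal_rep ::
  "('r::field \<Rightarrow> 'v::ab_group_add \<Rightarrow> 'v) \<Rightarrow> nat \<Rightarrow> ('k::field mat \<Rightarrow> 'v \<Rightarrow> 'v) \<Rightarrow> bool" where
  "cuspidal_rep scale n \<rho> \<longleftrightarrow> irreducible_rep scale n \<rho> \<and>
     (\<forall>S. S \<subseteq> {1..<n} \<longrightarrow> S \<noteq> {} \<longrightarrow> (\<forall>x\<in>GLmat n. \<forall>w.
        (\<forall>y\<in>unip_radical n S x. \<rho> y w = w) \<longrightarrow> w = 0))"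

text \<open>Hom_{R[H]}(1,\<tau>) = 0, i.e. \<tau> has no nonzero H-fixed vector.\<close>
definition no_invariants :: "('k mat \<Rightarrow> 'v::zero \<Rightarrow> 'v) \<Rightarrow> 'k mat set \<Rightarrow> bool" where
  "no_invariants \<rho> H \<longleftrightarrow> (\<forall>w. (\<forall>h\<in>H. \<rho> h w = w) \<longrightarrow> w = 0)"

end

theory Submission
  imports Defs
begin

text \<open>Conjugation by the antidiagonal permutation matrix carries the unipotent radical of the
  standard parabolic of type \<open>(n-1,1)\<close> onto the lower unitriangular matrices supported on the
  first column. Such a matrix over \<open>k\<^sub>F\<close> lifts to an integral matrix \<open>k\<close> of the same shape, and
  \<open>g\<^sup>-\<^sup>1 k g\<close> again has this shape, its entry in row \<open>i\<close> being multiplied by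
  \<open>\<pi>^(\<alpha>\<^sub>n\<^sub>-\<^sub>1 - e\<^sub>i)\<close>, where \<open>\<pi>^e\<^sub>i\<close> is the \<open>i\<close>-th diagonal entry of \<open>g\<close>. As \<open>\<alpha>\<^sub>n\<^sub>-\<^sub>1\<close> is the
  largest exponent and is at least \<open>m\<close>, \<open>g\<^sup>-\<^sup>1 k g \<in> K\<^sub>n(m)\<close>. Hence the image of
  \<open>K\<^sub>n \<inter> g K\<^sub>n(m) g\<^sup>-\<^sup>1\<close> contains the unipotent radical of a proper parabolic subgroup, which
  fixes no nonzero vector of the cuspidal \<open>\<tau>\<close>.\<close>

lemma discrete_valuation_one:
  assumes "discrete_valuation v"
  shows "v 1 = 0"
proof -
  have "v (1 * 1) = v 1 + v 1"
    using assms unfolding discrete_valuation_def by (metis one_neq_zero)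
  then show ?thesis by simp
qed

lemma discrete_valuation_power:
  assumes "discrete_valuation v" "\<pi> \<noteq> 0" "v \<pi> = 1"
  shows "v (\<pi> ^ t) = int t"
proof (induction t)
  case 0
  then show ?case using discrete_valuation_one[OF assms(1)] by simp
next
  case (Suc t)
  have "v (\<pi> * \<pi> ^ t) = v \<pi> + v (\<pi> ^ t)"
    using assms unfolding discrete_valuation_def by auto
  then show ?case using Suc assms(3) by simp
qed

lemma in_pow_ideal_mult:
  assumes "discrete_valuation v" "in_pow_ideal v a x" "in_pow_ideal v b y"
  shows "in_pow_ideal v (a + b) (x * y)"
  using assms unfolding discrete_valuation_def in_pow_ideal_def
  by (cases "x = 0 \<or> y = 0") auto

lemma in_pow_ideal_mono: "in_pow_ideal v a x \<Longrightarrow> b \<le> a \<Longrightarrow> in_pow_ideal v b x"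
  unfolding in_pow_ideal_def by auto

lemma in_pow_ideal_power:
  assumes "discrete_valuation v" "\<pi> \<noteq> 0" "v \<pi> = 1"
  shows "in_pow_ideal v (int t) (\<pi> ^ t)"
  using discrete_valuation_power[OF assms] unfolding in_pow_ideal_def by simp

lemma residue_map_lift:
  assumes "residue_map v red"
  obtains c where "\<And>i. c i \<in> val_ring v" "\<And>i. red (c i) = b i"
proof -
  have "\<forall>i. \<exists>z. z \<in> val_ring v \<and> red z = b i"
    using assms unfolding residue_map_def by (metis UNIV_I imageE)
  then show ?thesis
    using that by metis
qed

lemma residue_map_zero_one:
  assumes "residue_map v red"
  shows "red 0 = 0" "red 1 = 1"
  using assms unfolding residue_map_def val_ring_def max_ideal_def in_pow_ideal_def by auto

lemma det_lower_unitriangular: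
  fixes A :: "'a::comm_ring_1 mat"
  assumes "A \<in> carrier_mat n n" "\<And>i j. i < j \<Longrightarrow> j < n \<Longrightarrow> A $$ (i,j) = 0"
    and "\<And>i. i < n \<Longrightarrow> A $$ (i,i) = 1"
  shows "det A = 1"
proof -
  have "diag_mat A = replicate n 1"
    using assms(1,3) by (intro nth_equalityI) (auto simp: diag_mat_def)
  then show ?thesis
    using det_lower_triangular[OF assms(2,1)] by simp
qed

definition exchange_mat :: "nat \<Rightarrow> 'a::{zero,one} mat" where
  "exchange_mat n = mat n n (\<lambda>(i,j). if i + j = n - 1 then 1 else 0)"

lemma exchange_mat_carrier [simp]: "exchange_mat n \<in> carrier_mat n n"
  unfolding exchange_mat_def by simp

lemma exchange_mat_mult_left:
  fixes A :: "'a::semiring_1 mat"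
  assumes "A \<in> carrier_mat n nc"
  shows "exchange_mat n * A = mat n nc (\<lambda>(i,j). A $$ (n - 1 - i, j))"
proof (rule eq_matI)
  fix i j assume "i < dim_row (mat n nc (\<lambda>(i,j). A $$ (n - 1 - i, j)))"
    "j < dim_col (mat n nc (\<lambda>(i,j). A $$ (n - 1 - i, j)))"
  then have ij: "i < n" "j < nc" by auto
  have "(exchange_mat n * A) $$ (i,j) =
      (\<Sum>k\<in>{0..<n}. (if i + k = n - 1 then 1 else 0) * A $$ (k, j))"
    using assms ij by (simp add: exchange_mat_def scalar_prod_def)
  also have "\<dots> = (\<Sum>k\<in>{0..<n}. if k = n - 1 - i then A $$ (k, j) else 0)"
    using ij by (intro sum.cong) auto
  finally show "(exchange_mat n * A) $$ (i,j) = mat n nc (\<lambda>(i,j). A $$ (n - 1 - i, j)) $$ (i,j)"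
    using ij by simp
qed (use assms in \<open>auto simp: exchange_mat_def\<close>)

lemma exchange_mat_mult_right:
  fixes A :: "'a::semiring_1 mat"
  assumes "A \<in> carrier_mat nr n"
  shows "A * exchange_mat n = mat nr n (\<lambda>(i,j). A $$ (i, n - 1 - j))"
proof (rule eq_matI)
  fix i j assume "i < dim_row (mat nr n (\<lambda>(i,j). A $$ (i, n - 1 - j)))"
    "j < dim_col (mat nr n (\<lambda>(i,j). A $$ (i, n - 1 - j)))"
  then have ij: "i < nr" "j < n" by auto
  have "(A * exchange_mat n) $$ (i,j) =
      (\<Sum>k\<in>{0..<n}. A $$ (i, k) * (if k + j = n - 1 then 1 else 0))"
    using assms ij by (simp add: exchange_mat_def scalar_prod_def)
  also have "\<dots> = (\<Sum>k\<in>{0..<n}. if k = n - 1 - j then A $$ (i, k) else 0)"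
    using ij by (intro sum.cong) auto
  finally show "(A * exchange_mat n) $$ (i,j) = mat nr n (\<lambda>(i,j). A $$ (i, n - 1 - j)) $$ (i,j)"
    using ij by simp
qed (use assms in \<open>auto simp: exchange_mat_def\<close>)

lemma exchange_mat_in_GLmat: "exchange_mat n \<in> GLmat n"
proof -
  have "exchange_mat n * exchange_mat n = (1\<^sub>m n :: 'a::field mat)"
    by (subst exchange_mat_mult_left[of _ n n]) (auto simp: exchange_mat_def intro!: eq_matI)
  then have "det (exchange_mat n) * det (exchange_mat n :: 'a mat) = 1"
    by (metis det_mult det_one exchange_mat_carrier)
  then show ?thesis unfolding GLmat_def by auto
qed

lemma blk_singleton: "blk {s} i = (if s \<le> i then 1 else 0)"
proof -
  have "{t \<in> {s}. t \<le> i} = (if s \<le> i then {s} else {})" by auto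
  then show ?thesis unfolding blk_def by simp
qed

lemma std_unip_radical_last_column_entry:
  assumes "u \<in> std_unip_radical n {n - 1}" "i < n" "j < n" "i < n - 1 \<Longrightarrow> j < n - 1"
  shows "u $$ (i,j) = (if i = j then 1 else 0)"
proof -
  have "blk {n - 1} i = blk {n - 1} j \<or> blk {n - 1} j < blk {n - 1} i \<and> i \<noteq> j"
    using assms(2-4) by (auto simp: blk_singleton)
  then show ?thesis
    using assms(1-3) unfolding std_unip_radical_def by auto
qed

definition first_column_mat :: "nat \<Rightarrow> (nat \<Rightarrow> 'a::{zero,one}) \<Rightarrow> 'a mat" where
  "first_column_mat n c = mat n n (\<lambda>(i,j). if i = j then 1 else if j = 0 then c i else 0)"

lemma first_column_mat_carrier [simp]: "first_column_mat n c \<in> carrier_mat n n"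
  unfolding first_column_mat_def by simp

lemma unip_radical_conj_exchange_mat:
  fixes y :: "'a::field mat"
  assumes "y \<in> unip_radical n {n - 1} (exchange_mat n)"
  shows "y = first_column_mat n (\<lambda>i. y $$ (i,0))"
proof -
  obtain u where y: "y \<in> carrier_mat n n" and u: "u \<in> std_unip_radical n {n - 1}"
    and yu: "y * exchange_mat n = exchange_mat n * u"
    using assms unfolding unip_radical_def by auto
  have u_carrier: "u \<in> carrier_mat n n"
    using u unfolding std_unip_radical_def by auto
  have y_entry: "y $$ (i,j) = u $$ (n - 1 - i, n - 1 - j)" if "i < n" "j < n" for i j
  proof -
    have "y $$ (i,j) = (y * exchange_mat n) $$ (i, n - 1 - j)"
      using that by (simp add: exchange_mat_mult_right[OF y])
    also have "\<dots> = u $$ (n - 1 - i, n - 1 - j)"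
      using that by (simp add: yu exchange_mat_mult_left[OF u_carrier])
    finally show ?thesis .
  qed
  have "y $$ (i,j) = (if i = j then 1 else 0)" if "i < n" "j < n" "i \<noteq> 0 \<Longrightarrow> j \<noteq> 0" for i j
  proof -
    have "n - 1 - i < n - 1 \<Longrightarrow> n - 1 - j < n - 1"
      using that by (cases "i = 0"; cases "j = 0") auto
    moreover have "n - 1 - i = n - 1 - j \<longleftrightarrow> i = j"
      using that(1,2) by auto
    ultimately show ?thesis
      using y_entry[OF that(1,2)] std_unip_radical_last_column_entry[OF u, of "n - 1 - i" "n - 1 - j"]
        that(1,2) by simp
  qed
  then show ?thesis
    using y by (intro eq_matI) (auto simp: first_column_mat_def)
qed

lemma det_first_column_mat: "det (first_column_mat n c :: 'a::comm_ring_1 mat) = 1"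
  by (rule det_lower_unitriangular[of _ n]) (auto simp: first_column_mat_def)

lemma first_column_mat_in_Kn:
  assumes "discrete_valuation v" "\<And>i. c i \<in> val_ring v"
  shows "first_column_mat n c \<in> Kn v n"
proof -
  have "0 \<in> val_ring v" "1 \<in> val_ring v"
    using discrete_valuation_one[OF assms(1)] unfolding val_ring_def in_pow_ideal_def by auto
  then show ?thesis
    using assms unfolding Kn_def
    by (simp add: det_first_column_mat discrete_valuation_one) (auto simp: first_column_mat_def)
qed

lemma first_column_mat_in_Knm:
  assumes "discrete_valuation v" "\<And>i. c i \<in> val_ring v" "in_pow_ideal v (int m) (c (n - 1))"
    and "0 < n"
  shows "first_column_mat n c \<in> Knm v n m"
proof -
  have "first_column_mat n c $$ (n - 1, j) = (if j = 0 then c (n - 1) else 0)" if "j < n - 1" for j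
    using that by (simp add: first_column_mat_def)
  moreover have "first_column_mat n c $$ (n - 1, n - 1) = 1"
    using assms(4) by (simp add: first_column_mat_def)
  ultimately show ?thesis
    using first_column_mat_in_Kn[OF assms(1,2)] assms(3)
    unfolding Knm_def by (auto simp: in_pow_ideal_def)
qed

lemma first_column_mat_mult_mat_diag:
  fixes d :: "nat \<Rightarrow> 'a::comm_ring_1"
  assumes "\<And>i. 0 < i \<Longrightarrow> i < n \<Longrightarrow> c i * d 0 = d i * c' i"
  shows "first_column_mat n c * mat_diag n d = mat_diag n d * first_column_mat n c'"
  using assms
  by (auto simp: mat_diag_mult_left[of _ n n] mat_diag_mult_right[of _ n n] first_column_mat_def)

lemma reduce_first_column_mat:
  assumes "residue_map v red"
  shows "reduce_mat red (first_column_mat n c) = first_column_mat n (red \<circ> c)"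
  using residue_map_zero_one[OF assms]
  by (auto simp: reduce_mat_def first_column_mat_def)

lemma first_column_mat_in_reduce_Kn_cap_conj:
  assumes dv: "discrete_valuation v" and residue: "residue_map v red"
    and \<pi>: "\<pi> \<noteq> 0" "v \<pi> = 1"
    and n: "0 < n" and e_max: "\<And>i. i < n \<Longrightarrow> e i \<le> e 0" and e_last: "m + e (n - 1) \<le> e 0"
  shows "first_column_mat n b \<in> reduce_mat red ` Kn_cap_conj v n m (mat_diag n (\<lambda>i. \<pi> ^ e i))"
proof -
  obtain c where c: "\<And>i. c i \<in> val_ring v" "\<And>i. red (c i) = b i"
    using residue_map_lift[OF residue, where b = b] by blast
  define c' where "c' i = \<pi> ^ (e 0 - e i) * c i" for i
  have c'_int: "in_pow_ideal v (int (e 0 - e i)) (c' i)" for i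
    using in_pow_ideal_mult[OF dv in_pow_ideal_power[OF dv \<pi>], of 0 "c i"] c(1)
    unfolding c'_def val_ring_def by simp
  have "c' i \<in> val_ring v" for i
    using in_pow_ideal_mono[OF c'_int] unfolding val_ring_def by simp
  moreover have "in_pow_ideal v (int m) (c' (n - 1))"
    by (rule in_pow_ideal_mono[OF c'_int]) (use e_last in simp)
  ultimately have "first_column_mat n c' \<in> Knm v n m"
    using first_column_mat_in_Knm[OF dv _ _ n] by blast
  moreover have "first_column_mat n c * mat_diag n (\<lambda>i. \<pi> ^ e i)
      = mat_diag n (\<lambda>i. \<pi> ^ e i) * first_column_mat n c'"
    using e_max by (intro first_column_mat_mult_mat_diag)
      (simp add: c'_def power_add[symmetric] mult.left_commute)
  ultimately have "first_column_mat n c \<in> Kn_cap_conj v n m (mat_diag n (\<lambda>i. \<pi> ^ e i))"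
    using first_column_mat_in_Kn[OF dv, of c] c(1) unfolding Kn_cap_conj_def by blast
  moreover have "reduce_mat red (first_column_mat n c) = first_column_mat n b"
    using c(2) by (simp add: reduce_first_column_mat[OF residue] comp_def)
  ultimately show ?thesis by (metis image_eqI)
qed

lemma no_invariants_antimono: "no_invariants \<rho> H \<Longrightarrow> H \<subseteq> H' \<Longrightarrow> no_invariants \<rho> H'"
  unfolding no_invariants_def by blast

lemma cuspidal_rep_no_invariants_unip_radical:
  assumes "cuspidal_rep scale n \<rho>" "S \<subseteq> {1..<n}" "S \<noteq> {}" "x \<in> GLmat n"
  shows "no_invariants \<rho> (unip_radical n S x)"
  using assms unfolding cuspidal_rep_def no_invariants_def by blast

theorem proposition4p7:
  fixes v :: "'f::field \<Rightarrow> int" and red :: "'f \<Rightarrow> 'k::{field,finite}" and \<pi> :: 'f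
    and scale :: "'r::alg_closed_field \<Rightarrow> 'v::ab_group_add \<Rightarrow> 'v"
    and \<tau> :: "'k mat \<Rightarrow> 'v \<Rightarrow> 'v"
    and n m :: nat and \<alpha> :: "nat \<Rightarrow> nat"
  assumes F: "nonarch_local_field v red \<pi>"
    and charR: "CHAR('r) \<noteq> CHAR('k)"
    and n: "n \<ge> 2" and m: "m \<ge> 1"
    and cusp: "cuspidal_rep scale n \<tau>"
    and \<alpha>_mono: "\<forall>i j. 1 \<le> i \<longrightarrow> i \<le> j \<longrightarrow> j \<le> n - 1 \<longrightarrow> \<alpha> i \<le> \<alpha> j"
    and \<alpha>_top: "\<alpha> (n - 1) \<ge> m"
  shows "no_invariants \<tau> (reduce_mat red ` Kn_cap_conj v n m (gdiag \<pi> n \<alpha>))"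
proof -
  have dv: "discrete_valuation v" and residue: "residue_map v red" and \<pi>: "\<pi> \<noteq> 0" "v \<pi> = 1"
    using F unfolding nonarch_local_field_def by auto
  define e where "e i = (if i < n - 1 then \<alpha> (n - 1 - i) else 0)" for i
  have g: "gdiag \<pi> n \<alpha> = mat_diag n (\<lambda>i. \<pi> ^ e i)"
    unfolding gdiag_def mat_diag_def e_def by (rule cong_mat) auto
  have "e i \<le> e 0" if "i < n" for i
    using \<alpha>_mono that n unfolding e_def by auto
  moreover have "m + e (n - 1) \<le> e 0"
    using \<alpha>_top n unfolding e_def by auto
  ultimately have lifts: "first_column_mat n b \<in> reduce_mat red ` Kn_cap_conj v n m (gdiag \<pi> n \<alpha>)"
    for b :: "nat \<Rightarrow> 'k"
    unfolding g using first_column_mat_in_reduce_Kn_cap_conj[OF dv residue \<pi>] n by simp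
  have "no_invariants \<tau> (unip_radical n {n - 1} (exchange_mat n))"
    using cuspidal_rep_no_invariants_unip_radical[OF cusp _ _ exchange_mat_in_GLmat] n by auto
  moreover have "unip_radical n {n - 1} (exchange_mat n)
      \<subseteq> reduce_mat red ` Kn_cap_conj v n m (gdiag \<pi> n \<alpha>)"
    using unip_radical_conj_exchange_mat lifts by (metis subsetI)
  ultimately show ?thesis
    by (rule no_invariants_antimono)
qed

end
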